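(* Let $l,k\ge 2$ be integers, $q$ a prime number and $\mathbb{A}\subseteq\mathbb{Q}$. Then: (1) $\mathbb{A}\text{-}\mathcal{KS}(q^{2})\subseteq\mathbb{A}\text{-}\mathcal{KS}(q^{l})$; (2) if $(k-1)\mid(l-1)$, then $\mathbb{A}\text{-}\mathcal{KS}(q^{k})\subseteq\mathbb{A}\text{-}\mathcal{KS}(q^{l})$.
   Context: Every nonzero rational $\alpha$ is written $\alpha=\alpha_1/\alpha_2$ with $\alpha_1\in\mathbb{Z}$, $\alpha_2$ a positive integer and $\gcd(\alpha_1,\alpha_2)=1$. For an integer $N\ge 2$ and a nonzero rational $\alpha=\alpha_1/\alpha_2$, $N$ is called an $\alpha$-Korselt number if $N\neq\alpha$ and $\alpha_2p-\alpha_1$ divides $\alpha_2N-\alpha_1$ (in $\mathbb{Z}$) for every prime divisor $p$ of $N$. For $\mathbb{A}\subseteq\mathbb{Q}$, $\mathbb{A}\text{-}\mathcal{KS}(N)$ is the set of all $\beta\in\mathbb{A}\setminus\{0,N\}$ such that $N$ is a $\beta$-Korselt number. *)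

theory Defs
  imports Complex_Main "HOL-Computational_Algebra.Primes"
begin

definition korselt :: "rat \<Rightarrow> nat \<Rightarrow> bool" where
  "korselt \<alpha> N \<longleftrightarrow> N \<ge> 2 \<and> \<alpha> \<noteq> 0 \<and> \<alpha> \<noteq> of_nat N \<and>
     (\<forall>p. prime p \<and> p dvd N \<longrightarrow>
        (let (a1, a2) = quotient_of \<alpha> in (a2 * int p - a1) dvd (a2 * int N - a1)))"

definition KS :: "rat set \<Rightarrow> nat \<Rightarrow> rat set" where
  "KS A N = {\<beta> \<in> A - {0, of_nat N}. korselt \<beta> N}"

end

theory Submission
  imports Defs
begin

text \<open>For N = q^m the only prime divisor of N is q, so N is an \<alpha>-Korselt number
  (\<alpha> = a1/a2) iff a2 q - a1 divides a2 q^m - a1. Modulo d = a2 q - a1 we have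
  a2 q^m - a1 \<equiv> a1 (q^(m-1) - 1), and q^(k-1) - 1 divides q^(l-1) - 1 whenever
  k - 1 divides l - 1; hence the divisibility condition passes from q^k to q^l.
  It remains to see that \<alpha> = q^l cannot occur: it would make q^l - q divide the
  strictly smaller positive number q^l - q^k.\<close>

lemma power_diff_one_dvd_power_mult_diff_one:
  fixes x :: "'a::comm_ring_1"
  shows "x ^ m - 1 dvd x ^ (m * t) - 1"
  unfolding power_mult power_diff_1_eq[of "x ^ m" t] by simp

lemma mult_power_diff_eq:
  fixes a x b :: "'a::comm_ring_1"
  assumes "m \<ge> 1"
  shows "a * x ^ m - b = x ^ (m - 1) * (a * x - b) + b * (x ^ (m - 1) - 1)"
proof -
  obtain n where "m = Suc n" using assms by (cases m) auto
  then show ?thesis by (simp add: algebra_simps)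
qed

lemma dvd_mult_power_diff_iff:
  fixes a x b :: "'a::comm_ring_1"
  assumes "m \<ge> 1"
  shows "a * x - b dvd a * x ^ m - b \<longleftrightarrow> a * x - b dvd b * (x ^ (m - 1) - 1)"
  unfolding mult_power_diff_eq[OF assms] by (simp add: dvd_add_right_iff)

lemma dvd_mult_power_diff_transfer:
  fixes a x b :: "'a::comm_ring_1"
  assumes "a * x - b dvd a * x ^ k - b" and "k \<ge> 1" and "l \<ge> 1" and "k - 1 dvd l - 1"
  shows "a * x - b dvd a * x ^ l - b"
proof -
  obtain t where "l - 1 = (k - 1) * t" using assms(4) ..
  then have "x ^ (k - 1) - 1 dvd x ^ (l - 1) - 1"
    by (simp add: power_diff_one_dvd_power_mult_diff_one)
  then have "b * (x ^ (k - 1) - 1) dvd b * (x ^ (l - 1) - 1)"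
    by (rule mult_dvd_mono[OF dvd_refl])
  moreover have "a * x - b dvd b * (x ^ (k - 1) - 1)"
    using assms(1) dvd_mult_power_diff_iff[OF assms(2)] by blast
  ultimately show ?thesis
    using dvd_mult_power_diff_iff[OF assms(3)] dvd_trans by blast
qed

lemma int_power_diff_dvd_imp_eq:
  fixes y :: int
  assumes "y \<ge> 2" and "2 \<le> k" and "k \<le> l" and "y ^ l - y dvd y ^ l - y ^ k"
  shows "k = l"
proof (rule ccontr)
  assume "k \<noteq> l"
  then have "y ^ k < y ^ l"
    using assms(1,3) by (intro power_strict_increasing) auto
  moreover have "y ^ 1 < y ^ k"
    using assms(1,2) by (intro power_strict_increasing) auto
  ultimately have "\<not> y ^ l - y dvd y ^ l - y ^ k"
    by (intro zdvd_not_zless) auto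
  with assms(4) show False by contradiction
qed

lemma korselt_prime_power_iff:
  assumes "prime q" and "m \<ge> 1" and "quotient_of \<beta> = (a1, a2)"
  shows "korselt \<beta> (q ^ m) \<longleftrightarrow>
    \<beta> \<noteq> 0 \<and> \<beta> \<noteq> of_nat (q ^ m) \<and> a2 * int q - a1 dvd a2 * int q ^ m - a1"
proof -
  have prime_divisors: "prime p \<and> p dvd q ^ m \<longleftrightarrow> p = q" for p
  proof
    assume "prime p \<and> p dvd q ^ m"
    then show "p = q"
      using assms(1) prime_dvd_power primes_dvd_imp_eq by blast
  next
    assume "p = q"
    then show "prime p \<and> p dvd q ^ m"
      using assms(1,2) by (simp add: dvd_power)
  qed
  have "q ^ m \<ge> q ^ 1"
    using assms(2) prime_gt_0_nat[OF assms(1)] by (intro power_increasing) auto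
  then have "q ^ m \<ge> 2"
    using prime_ge_2_nat[OF assms(1)] by simp
  with assms(3) show ?thesis
    unfolding korselt_def prime_divisors by simp
qed

lemma not_korselt_prime_power_of_larger_power:
  assumes "prime q" and "2 \<le> k" and "k < l"
  shows "\<not> korselt (of_nat (q ^ l)) (q ^ k)"
proof
  assume "korselt (of_nat (q ^ l)) (q ^ k)"
  moreover have "quotient_of (of_nat (q ^ l)) = (int q ^ l, 1)"
    using quotient_of_rat_of_int[of "int q ^ l"] by simp
  ultimately have "int q - int q ^ l dvd int q ^ k - int q ^ l"
    using korselt_prime_power_iff[OF assms(1)] assms(2) by simp
  then have "int q ^ l - int q dvd int q ^ l - int q ^ k"
    unfolding minus_diff_eq[symmetric, of "int q ^ l"] minus_dvd_iff dvd_minus_iff .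
  then have "k = l"
    using assms prime_ge_2_nat by (intro int_power_diff_dvd_imp_eq[of "int q"]) auto
  with assms(3) show False by simp
qed

lemma KS_prime_power_mono:
  assumes "prime q" and "2 \<le> k" and "2 \<le> l" and "k - 1 dvd l - 1"
  shows "KS A (q ^ k) \<subseteq> KS A (q ^ l)"
proof
  fix \<beta> assume \<beta>: "\<beta> \<in> KS A (q ^ k)"
  obtain a1 a2 where quot: "quotient_of \<beta> = (a1, a2)"
    by (cases "quotient_of \<beta>")
  have korselt_k: "korselt \<beta> (q ^ k)" and "\<beta> \<in> A"
    using \<beta> by (simp_all add: KS_def)
  have "k - 1 \<le> l - 1"
    using assms(3,4) by (intro dvd_imp_le) auto
  then have "k \<le> l"
    using assms(2) by linarith
  have "\<beta> \<noteq> 0" and "a2 * int q - a1 dvd a2 * int q ^ k - a1"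
    using korselt_k korselt_prime_power_iff[OF assms(1) _ quot, of k] assms(2) by simp_all
  have "a2 * int q - a1 dvd a2 * int q ^ l - a1"
    by (rule dvd_mult_power_diff_transfer[OF \<open>_ dvd a2 * int q ^ k - a1\<close> _ _ assms(4)])
      (use assms(2,3) in simp_all)
  moreover have "\<beta> \<noteq> of_nat (q ^ l)"
  proof (cases "k = l")
    case True
    with \<beta> show ?thesis by (simp add: KS_def)
  next
    case False
    with \<open>k \<le> l\<close> have "\<not> korselt (of_nat (q ^ l)) (q ^ k)"
      by (intro not_korselt_prime_power_of_larger_power[OF assms(1,2)]) simp
    with korselt_k show ?thesis by blast
  qed
  ultimately show "\<beta> \<in> KS A (q ^ l)"
    using \<open>\<beta> \<in> A\<close> \<open>\<beta> \<noteq> 0\<close> korselt_prime_power_iff[OF assms(1) _ quot, of l] assms(3)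
    by (simp add: KS_def)
qed

theorem proposition2p6:
  fixes l k q :: nat and A :: "rat set"
  assumes "l \<ge> 2" and "k \<ge> 2" and "prime q"
  shows "KS A (q ^ 2) \<subseteq> KS A (q ^ l) \<and>
         ((k - 1) dvd (l - 1) \<longrightarrow> KS A (q ^ k) \<subseteq> KS A (q ^ l))"
  using KS_prime_power_mono[OF assms(3) _ assms(1)] assms(2) by simp

end
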